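(* Let $X_\lambda$ be a cellular multipointed $d$-space and $\gamma$ an execution path of $X_\lambda$. Then the globular naturalization $\mathrm{natgl}(\gamma)$ of $\gamma$ is a regular path.
   Context: $\mathcal{M}(\ell,\ell')$ denotes the set of non-decreasing surjective continuous maps $[0,\ell]\to[0,\ell']$. Moore composition $*$ concatenates paths $[0,\ell_1]\to U$ and $[0,\ell_2]\to U$ into a path $[0,\ell_1+\ell_2]\to U$; normalized composition of $\gamma_1,\gamma_2:[0,1]\to U$ is $\gamma_1*_N\gamma_2(t)=\gamma_1(2t)$ for $t\le1/2$, $\gamma_2(2t-1)$ for $t\ge1/2$. A multipointed $d$-space is $(|X|,X^0,\mathbb{P}^{\mathrm{top}}X)$: a space, a set of states $X^0\subset|X|$, a set of continuous maps $[0,1]\to|X|$ (execution paths) with endpoints in $X^0$, closed under precomposition by $\mathcal{M}(1,1)$ and normalized composition; maps preserve states and execution paths. For a space $Z$, $\mathrm{Glob}^{\mathrm{top}}(Z)$ is the multipointed $d$-space whose underlying space is the quotient of $\{0,1\}\sqcup Z\times[0,1]$ identifying $(z,0)$ with $0$ and $(z,1)$ with $1$ for all $z$, whose states are $\{0,1\}$, and whose execution paths are $\delta_z\phi$ with $z\in Z$, $\phi\in\mathcal{M}(1,1)$, $\delta_z(t)=(z,t)$. $\mathbf{D}^n$ is the closed $n$-disk, $\mathbf{S}^{n-1}$ its boundary sphere ($\mathbf{D}^0$ a point, $\mathbf{S}^{-1}=\varnothing$). A cellular multipointed $d$-space is the colimit $X_\lambda=\varinjlim_{\nu<\lambda}X_\nu$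 of a colimit-preserving functor $\nu\mapsto X_\nu$ on an ordinal $\lambda$ such that $X_0=(X^0,X^0,\varnothing)$ for a set $X^0$, and for each $\nu<\lambda$, $X_{\nu+1}$ is the pushout of $\mathrm{Glob}^{\mathrm{top}}(\mathbf{S}^{n_\nu-1})\to\mathrm{Glob}^{\mathrm{top}}(\mathbf{D}^{n_\nu})$ (induced by the inclusion) along some map $g_\nu:\mathrm{Glob}^{\mathrm{top}}(\mathbf{S}^{n_\nu-1})\to X_\nu$, $n_\nu\ge0$; let $\widehat{g_\nu}:\mathrm{Glob}^{\mathrm{top}}(\mathbf{D}^{n_\nu})\to X_\lambda$ be the induced map. Known fact (used to define $\mathrm{natgl}$): every execution path $\gamma$ of $X_\lambda$ has a unique decomposition $\gamma=\mathrm{natgl}(\gamma)\phi$ with $\mathrm{natgl}(\gamma)=(\widehat{g_{\nu_1}}\delta_{z_1})*\dots*(\widehat{g_{\nu_n}}\delta_{z_n})$, $n\ge1$, $\nu_i<\lambda$, $z_i\in\mathbf{D}^{n_{\nu_i}}\setminus\mathbf{S}^{n_{\nu_i}-1}$, and $\phi\in\mathcal{M}(1,n)$; $\mathrm{natgl}(\gamma)$ is called the globular naturalization of $\gamma$. A Moore path $\gamma:[0,L]\to U$ is regular if it is constant, or if whenever $[a,b]\subset[0,L]$ and $\gamma$ restricted to $[a,b]$ is constant, then $a=b$. *)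

theory Defs
  imports "HOL-Analysis.Analysis"
begin

definition reparam :: "real \<Rightarrow> real \<Rightarrow> (real \<Rightarrow> real) set" where
  "reparam l l' = {\<phi>. continuous_on {0..l} \<phi> \<and> mono_on {0..l} \<phi> \<and> \<phi> ` {0..l} = {0..l'}}"

definition ncomp :: "(real \<Rightarrow> 'a) \<Rightarrow> (real \<Rightarrow> 'a) \<Rightarrow> real \<Rightarrow> 'a" where
  "ncomp p q t = (if t \<le> 1/2 then p (2 * t) else q (2 * t - 1))"

text \<open>Moore composition p_0 * ... * p_(n-1) of n paths [0,1] -> U, a path [0,n] -> U
  (meaningful when consecutive paths are composable).\<close>
definition moore_concat :: "nat \<Rightarrow> (nat \<Rightarrow> real \<Rightarrow> 'a) \<Rightarrow> real \<Rightarrow> 'a" where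
  "moore_concat n ps s =
     (let k = (if s \<ge> real n then n - 1 else nat \<lfloor>s\<rfloor>) in ps k (s - real k))"

definition regular_moore :: "real \<Rightarrow> (real \<Rightarrow> 'a) \<Rightarrow> bool" where
  "regular_moore L p \<longleftrightarrow>
     (\<forall>s\<in>{0..L}. p s = p 0) \<or>
     (\<forall>a b. 0 \<le> a \<and> a \<le> b \<and> b \<le> L \<and> (\<forall>s\<in>{a..b}. p s = p a) \<longrightarrow> a = b)"

record 'a mpd =
  mtop :: "'a topology"
  mstates :: "'a set"
  mpaths :: "(real \<Rightarrow> 'a) set"

definition mpd_morphism :: "('a \<Rightarrow> 'b) \<Rightarrow> 'a mpd \<Rightarrow> 'b mpd \<Rightarrow> bool" where
  "mpd_morphism f X Y \<longleftrightarrow>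
     continuous_map (mtop X) (mtop Y) f \<and> f ` mstates X \<subseteq> mstates Y \<and>
     (\<forall>\<gamma>\<in>mpaths X. f \<circ> \<gamma> \<in> mpaths Y)"

text \<open>Closure of a set of paths under normalized composition and reparametrization by
  M(1,1); paths are only relevant on [0,1], so the set is closed under agreement on [0,1].\<close>
inductive gen_path :: "(real \<Rightarrow> 'a) set \<Rightarrow> (real \<Rightarrow> 'a) \<Rightarrow> bool" for B where
  base: "\<gamma> \<in> B \<Longrightarrow> gen_path B \<gamma>"
| comp: "gen_path B p \<Longrightarrow> gen_path B q \<Longrightarrow> p 1 = q 0 \<Longrightarrow> gen_path B (ncomp p q)"
| repar: "gen_path B p \<Longrightarrow> \<phi> \<in> reparam 1 1 \<Longrightarrow> gen_path B (p \<circ> \<phi>)"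
| ext: "gen_path B p \<Longrightarrow> (\<forall>t\<in>{0..1}. q t = p t) \<Longrightarrow> gen_path B q"

text \<open>Points of R^n are functions nat => real vanishing from index n on.\<close>
definition disk :: "nat \<Rightarrow> (nat \<Rightarrow> real) set" where
  "disk n = {x. (\<forall>i\<ge>n. x i = 0) \<and> (\<Sum>i<n. (x i)\<^sup>2) \<le> 1}"

text \<open>The boundary sphere S^(n-1) of the n-disk (empty for n = 0).\<close>
definition sphere_bd :: "nat \<Rightarrow> (nat \<Rightarrow> real) set" where
  "sphere_bd n = {x. (\<forall>i\<ge>n. x i = 0) \<and> (\<Sum>i<n. (x i)\<^sup>2) = 1}"

definition eucl_top :: "(nat \<Rightarrow> real) set \<Rightarrow> (nat \<Rightarrow> real) topology" where
  "eucl_top A = subtopology (powertop_real UNIV) A"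

text \<open>Points of Glob(Z): the two states and the classes of (z,t) with 0 < t < 1.\<close>
datatype 'z glob = Gl0 | Gl1 | GlPt 'z real

definition glob_pt :: "'z \<Rightarrow> real \<Rightarrow> 'z glob" where
  "glob_pt z t = (if t = 0 then Gl0 else if t = 1 then Gl1 else GlPt z t)"

definition glob_carrier :: "'z set \<Rightarrow> 'z glob set" where
  "glob_carrier Z = {Gl0, Gl1} \<union> {GlPt z t | z t. z \<in> Z \<and> 0 < t \<and> t < 1}"

text \<open>Quotient topology of {0,1} + Z x [0,1] (the summand {0,1} being discrete).\<close>
definition glob_top :: "'z topology \<Rightarrow> 'z glob topology" where
  "glob_top T = topology (\<lambda>U. U \<subseteq> glob_carrier (topspace T) \<and>
      openin (prod_topology T (top_of_set {0..1}))
        {(z, t) \<in> topspace T \<times> {0..1}. glob_pt z t \<in> U})"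

definition Glob :: "'z topology \<Rightarrow> 'z glob mpd" where
  "Glob T = \<lparr> mtop = glob_top T, mstates = {Gl0, Gl1},
     mpaths = {\<lambda>t. glob_pt z (\<phi> t) | z \<phi>. z \<in> topspace T \<and> \<phi> \<in> reparam 1 1} \<rparr>"

text \<open>Underlying points of a cellular multipointed d-space with set of states of type 's
  and cells indexed by 'i: a state, or an interior point (z,t) of the cell number mu.\<close>
datatype ('s, 'i) cpt = State 's | Cell 'i "nat \<Rightarrow> real" real

definition ghat :: "('i \<Rightarrow> nat) \<Rightarrow> ('i \<Rightarrow> (nat \<Rightarrow> real) glob \<Rightarrow> ('s, 'i) cpt)
                     \<Rightarrow> 'i \<Rightarrow> (nat \<Rightarrow> real) glob \<Rightarrow> ('s, 'i) cpt" where
  "ghat nd g \<mu> p = (case p of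
       Gl0 \<Rightarrow> g \<mu> Gl0
     | Gl1 \<Rightarrow> g \<mu> Gl1
     | GlPt z t \<Rightarrow> (if z \<in> sphere_bd (nd \<mu>) then g \<mu> (GlPt z t) else Cell \<mu> z t))"

definition stage_carrier :: "'s set \<Rightarrow> ('i \<Rightarrow> nat) \<Rightarrow> 'i set \<Rightarrow> ('s, 'i) cpt set" where
  "stage_carrier S0 nd J = State ` S0 \<union>
     {Cell \<mu> z t | \<mu> z t. \<mu> \<in> J \<and> z \<in> disk (nd \<mu>) - sphere_bd (nd \<mu>) \<and> 0 < t \<and> t < 1}"

text \<open>The multipointed d-space obtained from X_0 = (S0,S0,empty) by attaching the cells
  indexed by J (a down-closed set of indices): the colimit of the cell diagram, i.e. final
  topology w.r.t. the maps ghat_mu, states S0, and execution paths generated by the images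
  of the execution paths of the globes.\<close>
definition cell_stage :: "'s set \<Rightarrow> ('i \<Rightarrow> nat) \<Rightarrow> ('i \<Rightarrow> (nat \<Rightarrow> real) glob \<Rightarrow> ('s, 'i) cpt)
                          \<Rightarrow> 'i set \<Rightarrow> ('s, 'i) cpt mpd" where
  "cell_stage S0 nd g J = \<lparr>
     mtop = topology (\<lambda>U. U \<subseteq> stage_carrier S0 nd J \<and>
        (\<forall>\<mu>\<in>J. openin (glob_top (eucl_top (disk (nd \<mu>))))
                   {p \<in> glob_carrier (disk (nd \<mu>)). ghat nd g \<mu> p \<in> U})),
     mstates = State ` S0,
     mpaths = Collect (gen_path
        {(\<lambda>t. ghat nd g \<mu> (glob_pt z t)) | \<mu> z. \<mu> \<in> J \<and> z \<in> disk (nd \<mu>)}) \<rparr>"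

text \<open>Cellular data: set of states S0, well-ordered set of cell indices I (of order type
  lambda), dimensions n_nu, and attaching maps g_nu : Glob(S^(n_nu - 1)) -> X_nu.\<close>
definition cellular :: "'s set \<Rightarrow> ('i::wellorder) set \<Rightarrow> ('i \<Rightarrow> nat)
                        \<Rightarrow> ('i \<Rightarrow> (nat \<Rightarrow> real) glob \<Rightarrow> ('s, 'i) cpt) \<Rightarrow> bool" where
  "cellular S0 I nd g \<longleftrightarrow>
     (\<forall>\<nu>\<in>I. mpd_morphism (g \<nu>) (Glob (eucl_top (sphere_bd (nd \<nu>))))
                           (cell_stage S0 nd g {\<mu> \<in> I. \<mu> < \<nu>}))"

text \<open>(n, p) is a globular naturalization of the execution path gamma of X_lambda:
  p = (ghat_nu1 delta_z1) * ... * (ghat_nun delta_zn), z_i interior, and gamma = p o phi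
  on [0,1] with phi in M(1,n).\<close>
definition is_natgl :: "('i \<Rightarrow> nat) \<Rightarrow> ('i \<Rightarrow> (nat \<Rightarrow> real) glob \<Rightarrow> ('s, 'i) cpt) \<Rightarrow> 'i set
                        \<Rightarrow> (real \<Rightarrow> ('s, 'i) cpt) \<Rightarrow> nat \<Rightarrow> (real \<Rightarrow> ('s, 'i) cpt) \<Rightarrow> bool" where
  "is_natgl nd g I \<gamma> n p \<longleftrightarrow> n \<ge> 1 \<and>
     (\<exists>\<nu>s zs \<phi>.
        (\<forall>i<n. \<nu>s i \<in> I \<and> zs i \<in> disk (nd (\<nu>s i)) - sphere_bd (nd (\<nu>s i))) \<and>
        (\<forall>i. i + 1 < n \<longrightarrow> ghat nd g (\<nu>s i) Gl1 = ghat nd g (\<nu>s (i + 1)) Gl0) \<and>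
        p = moore_concat n (\<lambda>i t. ghat nd g (\<nu>s i) (glob_pt (zs i) t)) \<and>
        \<phi> \<in> reparam 1 (real n) \<and>
        (\<forall>t\<in>{0..1}. \<gamma> t = p (\<phi> t)))"

end

theory Submission
  imports Defs
begin

text \<open>Hence the naturalization is injective on every open segment (k, k + 1), and a
  path that is injective on these segments cannot be constant on a nondegenerate interval.\<close>

lemma moore_concat_eq:
  assumes "real k \<le> s" "s < real k + 1" "s < real n"
  shows "moore_concat n ps s = ps k (s - real k)"
proof -
  have "\<lfloor>s\<rfloor> = int k" using assms(1,2) by (simp add: floor_eq_iff)
  then show ?thesis using assms(3) unfolding moore_concat_def Let_def by simp
qed

lemma ghat_glob_pt_interior:
  assumes "z \<notin> sphere_bd (nd \<mu>)" "0 < t" "t < 1"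
  shows "ghat nd g \<mu> (glob_pt z t) = Cell \<mu> z t"
  using assms by (simp add: glob_pt_def ghat_def)

lemma regular_moore_if_inj_on_unit_segments:
  assumes inj: "\<And>k. k < n \<Longrightarrow> inj_on p {real k<..<real k + 1}"
  shows "regular_moore (real n) p"
  unfolding regular_moore_def
proof (intro disjI2 allI impI, elim conjE)
  fix a b
  assume ab: "0 \<le> a" "a \<le> b" "b \<le> real n" and const: "\<forall>s\<in>{a..b}. p s = p a"
  show "a = b"
  proof (rule ccontr)
    assume "a \<noteq> b"
    define k where "k = nat \<lfloor>a\<rfloor>"
    define c where "c = min b (real k + 1)"
    have k: "real k \<le> a" "a < real k + 1"
      using ab(1) unfolding k_def by linarith+
    have "a < c" "k < n"
      using \<open>a \<noteq> b\<close> ab k unfolding c_def by auto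
    have seg: "{a<..<c} \<subseteq> {real k<..<real k + 1}" "{a<..<c} \<subseteq> {a..b}"
      using k unfolding c_def by auto
    have "inj_on p {a<..<c}"
      using inj[OF \<open>k < n\<close>] seg(1) by (rule inj_on_subset)
    moreover have "p ` {a<..<c} \<subseteq> {p a}"
      using const seg(2) by blast
    moreover have "infinite {a<..<c}"
      using \<open>a < c\<close> by (rule infinite_Ioo)
    ultimately show False
      using finite_imageD finite_subset by blast
  qed
qed

lemma natgl_inj_on_unit_segments:
  assumes "is_natgl nd g I \<gamma> n p" "k < n"
  shows "inj_on p {real k<..<real k + 1}"
proof -
  obtain \<nu>s zs where interior: "\<forall>i<n. zs i \<notin> sphere_bd (nd (\<nu>s i))"
    and p: "p = moore_concat n (\<lambda>i t. ghat nd g (\<nu>s i) (glob_pt (zs i) t))"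
    using assms(1) unfolding is_natgl_def by blast
  have "p s = Cell (\<nu>s k) (zs k) (s - real k)" if s: "s \<in> {real k<..<real k + 1}" for s
  proof -
    have "s < real n" using s \<open>k < n\<close> by auto
    then have "p s = ghat nd g (\<nu>s k) (glob_pt (zs k) (s - real k))"
      using s unfolding p by (intro moore_concat_eq) auto
    also have "\<dots> = Cell (\<nu>s k) (zs k) (s - real k)"
      using s interior \<open>k < n\<close> by (simp add: ghat_glob_pt_interior)
    finally show ?thesis .
  qed
  then show ?thesis
    by (intro inj_onI) force
qed

theorem proposition4p8:
  fixes S0 :: "'s set" and I :: "'i::wellorder set" and nd :: "'i \<Rightarrow> nat"
    and g :: "'i \<Rightarrow> (nat \<Rightarrow> real) glob \<Rightarrow> ('s, 'i) cpt"
    and \<gamma> :: "real \<Rightarrow> ('s, 'i) cpt"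
  assumes "cellular S0 I nd g"
    and "\<gamma> \<in> mpaths (cell_stage S0 nd g I)"
    and "is_natgl nd g I \<gamma> n p"
  shows "regular_moore (real n) p"
  using natgl_inj_on_unit_segments[OF assms(3)]
  by (rule regular_moore_if_inj_on_unit_segments)

end
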